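(* There exists an absolute constant $C_1>0$ such that for all integers $a\ge 2$ and $n\ge 3$, $$\mathrm{Pr}(a^{n}-1)\ \ge\ (a^{n}-1)^{C_1/\ln\ln n}.$$
   Context: For $n=p_1^{l_1}\cdots p_k^{l_k}$ ($p_i$ distinct primes, $l_i\ge1$) and an integer $a\ge 2$, the primitive primover cofactor of $a^n-1$ is $$\mathrm{Pr}(a^n-1)=\frac{\prod_{\varepsilon\in\{0,1\}^k,\ \varepsilon_1+\dots+\varepsilon_k\ \text{even}} \bigl(a^{p_1^{l_1-\varepsilon_1}\cdots p_k^{l_k-\varepsilon_k}}-1\bigr)}{\prod_{\varepsilon\in\{0,1\}^k,\ \varepsilon_1+\dots+\varepsilon_k\ \text{odd}} \bigl(a^{p_1^{l_1-\varepsilon_1}\cdots p_k^{l_k-\varepsilon_k}}-1\bigr)},$$ a positive integer dividing $a^n-1$. *)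

theory Defs
  imports "HOL-Analysis.Analysis" "HOL-Computational_Algebra.Primes"
begin

text \<open>Primitive primover cofactor of a^n - 1. Writing n = p_1^l_1 ... p_k^l_k,
  a vector eps in {0,1}^k corresponds to the subset S of prime factors with eps_i = 1,
  and p_1^(l_1-eps_1) ... p_k^(l_k-eps_k) = n div (prod S).\<close>
definition primover_cofactor :: "nat \<Rightarrow> nat \<Rightarrow> real" where
  "primover_cofactor a n =
     (\<Prod>S\<in>{S. S \<subseteq> prime_factors n \<and> even (card S)}. real a ^ (n div \<Prod>S) - 1) /
     (\<Prod>S\<in>{S. S \<subseteq> prime_factors n \<and> odd (card S)}. real a ^ (n div \<Prod>S) - 1)"

end

theory Submission
  imports Defs "HOL-Number_Theory.Totient"
begin

(*
  Write m(X) = n div \<Prod>X for a set X of prime factors of n.  Since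
  a^m - 1 = a^m (1 - a^-m), the cofactor splits as a power of a times a product of
  factors 1 - a^-m.  By inclusion-exclusion, the exponents m(X) over even X sum to
  the exponents over odd X plus Euler's totient, so the power of a is exactly
  a^totient(n).  The correction factors lie in (0,1]; the even ones have pairwise
  distinct exponents (X \<mapsto> m(X) is injective), so their product is at least
  \<Prod>(1 - 2^-j) \<ge> 9/32.  Hence  Pr(a^n - 1) \<ge> (9/32) a^totient(n).

  The second ingredient is the classical lower bound totient(n) \<ge> c n / ln ln n.
  It is derived elementarily: Chebyshev's bound theta(2^J) \<le> 2^(J+1) ln 2 (from the
  central binomial coefficient) gives Mertens' first estimate for \<Sum> ln p / p, partial
  summation gives \<Sum>_{p \<le> 2^J} 1/p \<le> ln J + 6, hence \<Prod>_{p \<le> 2^J} (1 - 1/p) \<ge> e^-8 / J.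
  Splitting the prime factors of n at y = 2^J \<approx> 2 ln n (there are at most ln n
  prime factors above y) yields the totient bound.
*)

section \<open>Squarefree divisors of n\<close>

lemma prod_prime_factors_dvd:
  fixes n :: nat
  assumes "n > 0" "X \<subseteq> prime_factors n"
  shows "\<Prod>X dvd n"
proof -
  have "\<Prod>X dvd \<Prod>(prime_factors n)"
    by (rule prod_dvd_prod_subset) (use assms in auto)
  also have "\<Prod>(prime_factors n) dvd (\<Prod>p\<in>prime_factors n. p ^ multiplicity p n)"
  proof (rule prod_dvd_prod)
    fix p assume "p \<in> prime_factors n"
    then have "multiplicity p n > 0" by (simp add: prime_factors_multiplicity)
    then show "p dvd p ^ multiplicity p n" by simp
  qed
  also have "\<dots> = n" using prime_factorization_nat[OF assms(1)] by simp
  finally show ?thesis .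
qed

lemma prod_prime_factors_le:
  fixes n :: nat
  assumes "n > 0" "X \<subseteq> prime_factors n"
  shows "\<Prod>X \<le> n"
  using dvd_imp_le[OF prod_prime_factors_dvd[OF assms] assms(1)] .

lemma prime_factors_prod_primes:
  fixes X :: "nat set"
  assumes "finite X" "\<And>p. p \<in> X \<Longrightarrow> prime p"
  shows "prime_factors (\<Prod>X) = X"
  using assms by (subst prime_factors_prod) (auto simp: prime_prime_factors dest: prime_gt_0_nat)

lemma cofactor_exponent_pos:
  fixes n :: nat
  assumes "n > 0" "X \<subseteq> prime_factors n"
  shows "0 < n div \<Prod>X"
  using dvd_div_mult_self[OF prod_prime_factors_dvd[OF assms]] assms(1)
  by (metis mult_0 neq0_conv)

lemma inj_on_cofactor_exponent:
  fixes n :: nat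
  assumes "n > 0"
  shows "inj_on (\<lambda>X. n div \<Prod>X) (Pow (prime_factors n))"
proof (rule inj_onI)
  fix X Y assume X: "X \<in> Pow (prime_factors n)" and Y: "Y \<in> Pow (prime_factors n)"
    and eq: "n div \<Prod>X = n div \<Prod>Y"
  have "\<Prod>X * (n div \<Prod>X) = n" "\<Prod>Y * (n div \<Prod>Y) = n"
    using prod_prime_factors_dvd[OF assms] X Y by auto
  then have "\<Prod>X * (n div \<Prod>X) = \<Prod>Y * (n div \<Prod>X)" using eq by simp
  moreover have "n div \<Prod>X > 0" using cofactor_exponent_pos[OF assms] X by simp
  ultimately have "\<Prod>X = \<Prod>Y" by simp
  moreover have "prime_factors (\<Prod>Z) = Z" if "Z \<in> Pow (prime_factors n)" for Z
    using that by (intro prime_factors_prod_primes) (auto intro: finite_subset)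
  ultimately show "X = Y" using X Y by metis
qed

lemma prod_one_minus_inverse_expand:
  fixes P :: "nat set"
  assumes "finite P"
  shows "(\<Prod>p\<in>P. 1 - 1 / real p) = (\<Sum>X\<in>Pow P. (-1) ^ card X / real (\<Prod>X))"
proof -
  have "(\<Prod>p\<in>P. 1 - 1 / real p) = (\<Prod>p\<in>P. (- (1 / real p)) + 1)" by simp
  also have "\<dots> = (\<Sum>X\<in>Pow P. (\<Prod>x\<in>X. - (1 / real x)) * (\<Prod>x\<in>P - X. 1))"
    by (rule prod_add[OF assms])
  also have "\<dots> = (\<Sum>X\<in>Pow P. (-1) ^ card X / real (\<Prod>X))"
  proof (rule sum.cong)
    fix X assume "X \<in> Pow P"
    have "(\<Prod>x\<in>X. - (1 / real x)) = (\<Prod>x\<in>X. (-1) / real x)" by simp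
    also have "\<dots> = (\<Prod>x\<in>X. (-1::real)) / (\<Prod>x\<in>X. real x)" by (rule prod_dividef)
    finally show "(\<Prod>x\<in>X. - (1 / real x)) * (\<Prod>x\<in>P - X. 1) = (-1) ^ card X / real (\<Prod>X)"
      by (simp add: of_nat_prod)
  qed simp
  finally show ?thesis .
qed

lemma totient_inclusion_exclusion:
  fixes n :: nat
  assumes "n > 0"
  shows "(\<Sum>X\<in>{X. X \<subseteq> prime_factors n \<and> even (card X)}. n div \<Prod>X)
       = (\<Sum>X\<in>{X. X \<subseteq> prime_factors n \<and> odd (card X)}. n div \<Prod>X) + totient n"
proof -
  define P where "P = prime_factors n"
  define Ev where "Ev = {X. X \<subseteq> P \<and> even (card X)}"
  define Od where "Od = {X. X \<subseteq> P \<and> odd (card X)}"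
  define f where "f X = (-1::real) ^ card X * real (n div \<Prod>X)" for X
  have fin: "finite Ev" "finite Od" unfolding Ev_def Od_def P_def by simp_all
  have "real (totient n) = real n * (\<Sum>X\<in>Pow P. (-1) ^ card X / real (\<Prod>X))"
    unfolding totient_formula2 P_def by (simp only: prod_one_minus_inverse_expand finite_set_mset)
  also have "\<dots> = (\<Sum>X\<in>Pow P. f X)"
    unfolding sum_distrib_left
  proof (rule sum.cong)
    fix X assume "X \<in> Pow P"
    then have "\<Prod>X dvd n" using prod_prime_factors_dvd[OF assms] unfolding P_def by auto
    then show "real n * ((-1) ^ card X / real (\<Prod>X)) = f X"
      unfolding f_def by (simp add: real_of_nat_div)
  qed simp
  also have "Pow P = Ev \<union> Od" unfolding Ev_def Od_def by auto
  also have "(\<Sum>X\<in>Ev \<union> Od. f X) = (\<Sum>X\<in>Ev. f X) + (\<Sum>X\<in>Od. f X)"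
    by (rule sum.union_disjoint[OF fin]) (auto simp: Ev_def Od_def)
  also have "(\<Sum>X\<in>Ev. f X) = (\<Sum>X\<in>Ev. real (n div \<Prod>X))"
    by (rule sum.cong) (auto simp: f_def Ev_def)
  also have "(\<Sum>X\<in>Od. f X) = - (\<Sum>X\<in>Od. real (n div \<Prod>X))"
    unfolding sum_negf[symmetric] by (rule sum.cong) (auto simp: f_def Od_def)
  finally have "real (\<Sum>X\<in>Ev. n div \<Prod>X) = real ((\<Sum>X\<in>Od. n div \<Prod>X) + totient n)"
    by simp
  then show ?thesis unfolding Ev_def Od_def P_def by (simp only: of_nat_eq_iff)
qed

section \<open>The cofactor is at least (9/32) a^totient(n)\<close>

lemma prod_power_minus_one:
  fixes x :: real
  assumes "x > 0"
  shows "(\<Prod>k\<in>A. x ^ m k - 1) = x ^ (\<Sum>k\<in>A. m k) * (\<Prod>k\<in>A. 1 - 1 / x ^ m k)"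
proof -
  have "x ^ m k - 1 = x ^ m k * (1 - 1 / x ^ m k)" for k
    using assms by (simp add: field_simps)
  then show ?thesis by (simp only: prod.distrib power_sum)
qed

lemma prod_subset_ge:
  fixes f :: "'a \<Rightarrow> real"
  assumes "finite B" "A \<subseteq> B" "\<And>x. x \<in> B \<Longrightarrow> 0 \<le> f x \<and> f x \<le> 1"
  shows "prod f B \<le> prod f A"
proof -
  have "prod f B = prod f (B - A) * prod f A" by (rule prod.subset_diff[OF assms(2,1)])
  moreover have "prod f (B - A) \<le> 1" using assms(3) by (intro prod_le_1) auto
  moreover have "prod f A \<ge> 0" using assms by (intro prod_nonneg) auto
  ultimately show ?thesis using mult_right_mono[of "prod f (B - A)" 1 "prod f A"] by simp
qed

text \<open>A strengthened invariant for the partial products of \<Prod>(1 - 2^-j).\<close>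
lemma prod_one_minus_inverse_pow2_strong:
  assumes "n \<ge> 2"
  shows "(\<Prod>j\<in>{1..n}. 1 - 1 / (2::real) ^ j) \<ge> 9/32 + (3/8) / 2 ^ n"
  using assms
proof (induction n rule: dec_induct)
  case base
  have "{1..2::nat} = {1, 2}" by auto
  then show ?case by simp
next
  case (step n)
  define x :: real where "x = 1 / 2 ^ n"
  have x: "0 \<le> x" "x \<le> 1/4"
  proof -
    have "(2::real) ^ 2 \<le> 2 ^ n" using step(1) by (intro power_increasing) auto
    then show "x \<le> 1/4" unfolding x_def by (simp add: divide_simps)
  qed (simp add: x_def)
  have "{1..Suc n} = insert (Suc n) {1..n}" by auto
  then have "(\<Prod>j\<in>{1..Suc n}. 1 - 1 / (2::real) ^ j)
      = (1 - x / 2) * (\<Prod>j\<in>{1..n}. 1 - 1 / (2::real) ^ j)"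
    by (simp add: x_def)
  also have "\<dots> \<ge> (1 - x / 2) * (9/32 + (3/8) * x)"
    using step.IH x by (intro mult_left_mono) (simp_all add: x_def)
  also have "(1 - x / 2) * (9/32 + (3/8) * x) = 9/32 + (3/8) * (x / 2) + (3 * x / 16) * (1/4 - x)"
    by (simp add: field_simps)
  also have "\<dots> \<ge> 9/32 + (3/8) * (x / 2)" using x by (simp add: mult_nonneg_nonneg)
  also have "9/32 + (3/8) * (x / 2) = 9/32 + (3/8) / (2::real) ^ Suc n" by (simp add: x_def)
  finally show ?case .
qed

lemma prod_one_minus_inverse_pow2: "(\<Prod>j\<in>{1..n}. 1 - 1 / (2::real) ^ j) \<ge> 9/32"
proof (cases "n \<ge> 2")
  case True
  have "(3/8) / (2::real) ^ n \<ge> 0" by simp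
  then show ?thesis using prod_one_minus_inverse_pow2_strong[OF True] by linarith
next
  case False
  then have "n = 0 \<or> n = 1" by auto
  then show ?thesis by auto
qed

lemma prod_one_minus_inverse_power:
  fixes a :: real
  assumes "a \<ge> 2" "finite K" "0 \<notin> K"
  shows "(\<Prod>k\<in>K. 1 - 1 / a ^ k) \<ge> 9/32"
proof -
  obtain N where "\<forall>k\<in>K. k \<le> N" using assms(2) finite_nat_set_iff_bounded_le by blast
  then have K: "K \<subseteq> {1..N}" using assms(3) by (auto simp: Suc_le_eq) (metis neq0_conv)
  have bounds: "0 \<le> 1 - 1 / (2::real) ^ k" "1 - 1 / (2::real) ^ k \<le> 1 - 1 / a ^ k"
    "1 - 1 / a ^ k \<le> 1" for k
  proof -
    have "(2::real) ^ k \<le> a ^ k" using assms(1) by (intro power_mono) auto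
    then show "1 - 1 / (2::real) ^ k \<le> 1 - 1 / a ^ k"
      by (simp add: frac_le)
    show "0 \<le> 1 - 1 / (2::real) ^ k" "1 - 1 / a ^ k \<le> 1" using assms(1) by simp_all
  qed
  have "9/32 \<le> (\<Prod>k\<in>{1..N}. 1 - 1 / (2::real) ^ k)" by (rule prod_one_minus_inverse_pow2)
  also have "\<dots> \<le> (\<Prod>k\<in>{1..N}. 1 - 1 / a ^ k)" using bounds(1,2) by (intro prod_mono) auto
  also have "\<dots> \<le> (\<Prod>k\<in>K. 1 - 1 / a ^ k)"
  proof (rule prod_subset_ge[OF _ K])
    fix k show "0 \<le> 1 - 1 / a ^ k \<and> 1 - 1 / a ^ k \<le> 1"
      using bounds(1,2,3)[of k] by linarith
  qed simp
  finally show ?thesis .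
qed

lemma primover_cofactor_ge:
  assumes "a \<ge> 2" "n > 0"
  shows "primover_cofactor a n \<ge> 9/32 * real a ^ totient n"
proof -
  define Ev where "Ev = {X. X \<subseteq> prime_factors n \<and> even (card X)}"
  define Od where "Od = {X. X \<subseteq> prime_factors n \<and> odd (card X)}"
  define m where "m X = n div \<Prod>X" for X :: "nat set"
  define g where "g X = 1 - 1 / real a ^ m X" for X
  have ra: "real a \<ge> 2" using assms(1) by simp
  have m_pos: "0 < m X" if "X \<subseteq> prime_factors n" for X
    unfolding m_def using cofactor_exponent_pos[OF assms(2) that] .
  have g_range: "0 < g X \<and> g X \<le> 1" if "X \<subseteq> prime_factors n" for X
  proof -
    have "real a ^ 1 \<le> real a ^ m X"
      using ra m_pos[OF that] by (intro power_increasing) auto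
    then have "2 \<le> real a ^ m X" using ra by (simp only: power_one_right)
    then have "1 / real a ^ m X \<le> 1 / 2" by (simp add: divide_simps)
    then show ?thesis using assms(1) unfolding g_def by simp
  qed
  have exps: "(\<Sum>X\<in>Ev. m X) = (\<Sum>X\<in>Od. m X) + totient n"
    unfolding Ev_def Od_def m_def by (rule totient_inclusion_exclusion[OF assms(2)])
  have odd_factor: "0 < prod g Od" "prod g Od \<le> 1"
    using g_range unfolding Od_def by (auto intro!: prod_pos prod_le_1 simp: less_imp_le)
  have even_factor: "prod g Ev \<ge> 9/32"
  proof -
    have "inj_on m Ev"
      using inj_on_cofactor_exponent[OF assms(2)] unfolding m_def Ev_def
      by (rule inj_on_subset) auto
    then have reindex: "prod g Ev = (\<Prod>k\<in>m ` Ev. 1 - 1 / real a ^ k)"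
      by (simp add: prod.reindex g_def)
    have "\<forall>k\<in>m ` Ev. 0 < k" using m_pos unfolding Ev_def by simp
    moreover have "finite (m ` Ev)" unfolding Ev_def by (intro finite_imageI) simp
    ultimately show ?thesis
      unfolding reindex using prod_one_minus_inverse_power[OF ra] by blast
  qed
  have numerator: "(\<Prod>X\<in>Ev. real a ^ m X - 1)
      = real a ^ (\<Sum>X\<in>Od. m X) * (real a ^ totient n * prod g Ev)"
    using prod_power_minus_one[of "real a" m Ev] ra unfolding exps power_add g_def by simp
  have denominator: "(\<Prod>X\<in>Od. real a ^ m X - 1) = real a ^ (\<Sum>X\<in>Od. m X) * prod g Od"
    using prod_power_minus_one[of "real a" m Od] ra unfolding g_def by simp
  have "9/32 * real a ^ totient n \<le> real a ^ totient n * prod g Ev"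
    using even_factor ra by (simp add: mult.commute)
  also have "\<dots> \<le> real a ^ totient n * prod g Ev / prod g Od"
    using odd_factor even_factor ra by (simp add: pos_le_divide_eq mult_left_le)
  also have "\<dots> = (\<Prod>X\<in>Ev. real a ^ m X - 1) / (\<Prod>X\<in>Od. real a ^ m X - 1)"
    using ra unfolding numerator denominator by simp
  also have "\<dots> = primover_cofactor a n"
    unfolding primover_cofactor_def Ev_def Od_def m_def by simp
  finally show ?thesis .
qed

section \<open>Chebyshev and Mertens type estimates\<close>

definition primes_upto :: "nat \<Rightarrow> nat set" where
  "primes_upto N = {p. prime p \<and> p \<le> N}"

lemma finite_primes_upto [simp]: "finite (primes_upto N)"
  unfolding primes_upto_def by auto

lemma primes_upto_ge_2: "p \<in> primes_upto N \<Longrightarrow> 2 \<le> p"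
  unfolding primes_upto_def by (simp add: prime_ge_2_nat)

definition chebyshev_theta :: "nat \<Rightarrow> real" where
  "chebyshev_theta N = (\<Sum>p\<in>primes_upto N. ln (real p))"

definition mertens_sum :: "nat \<Rightarrow> real" where
  "mertens_sum N = (\<Sum>p\<in>primes_upto N. ln (real p) / real p)"

definition prime_reciprocal_sum :: "nat \<Rightarrow> real" where
  "prime_reciprocal_sum N = (\<Sum>p\<in>primes_upto N. 1 / real p)"

text \<open>The primes in (m, 2m] all divide the central binomial coefficient, hence their
  product is at most 4^m.\<close>
lemma prod_primes_between_le: "\<Prod>{p. prime p \<and> m < p \<and> p \<le> 2 * m} \<le> 4 ^ m"
proof -
  let ?B = "(2 * m) choose m"
  have sub: "{p. prime p \<and> m < p \<and> p \<le> 2 * m} \<subseteq> prime_factors ?B"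
  proof
    fix p assume "p \<in> {p. prime p \<and> m < p \<and> p \<le> 2 * m}"
    then have pr: "prime p" and mp: "m < p" and p2: "p \<le> 2 * m" by auto
    have "p dvd fact (2 * m)" using pr p2 by (simp add: prime_dvd_fact_iff)
    also have "fact (2 * m) = fact m * fact m * ?B"
      using binomial_fact_lemma[of m "2 * m"] by simp
    finally have "p dvd fact m * fact m * ?B" .
    moreover have "\<not> p dvd fact m" using pr mp by (simp add: prime_dvd_fact_iff)
    ultimately have "p dvd ?B" using pr by (simp add: prime_dvd_mult_iff)
    then show "p \<in> prime_factors ?B" using pr by (intro prime_factorsI) auto
  qed
  have "\<Prod>{p. prime p \<and> m < p \<and> p \<le> 2 * m} \<le> ?B" by (rule prod_prime_factors_le[OF _ sub]) simp
  also have "\<dots> \<le> 2 ^ (2 * m)" by (rule binomial_le_pow2)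
  also have "\<dots> = 4 ^ m" by (simp add: power_mult)
  finally show ?thesis .
qed

lemma chebyshev_theta_double: "chebyshev_theta (2 * m) - chebyshev_theta m \<le> m * ln 4"
proof -
  let ?M = "{p. prime p \<and> m < p \<and> p \<le> 2 * m}"
  have split: "primes_upto (2 * m) = primes_upto m \<union> ?M"
    unfolding primes_upto_def by auto
  have M_pos: "\<Prod>?M > 0" by (rule prod_pos) (auto simp: prime_gt_0_nat)
  have "chebyshev_theta (2 * m) = chebyshev_theta m + (\<Sum>p\<in>?M. ln (real p))"
    unfolding chebyshev_theta_def split
    by (subst sum.union_disjoint) (auto simp: primes_upto_def)
  also have "(\<Sum>p\<in>?M. ln (real p)) = ln (real (\<Prod>?M))"
    by (subst of_nat_prod, subst ln_prod) (auto simp: prime_gt_0_nat)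
  also have "\<dots> \<le> ln (real (4 ^ m))"
    using M_pos prod_primes_between_le[of m]
    by (subst ln_le_cancel_iff) (simp_all only: of_nat_le_iff of_nat_0_less_iff zero_less_power)
  also have "\<dots> = m * ln 4" by (simp add: ln_realpow)
  finally show ?thesis by simp
qed

lemma chebyshev_theta_pow2: "chebyshev_theta (2 ^ J) \<le> 2 ^ (J + 1) * ln 2"
proof (induction J)
  case 0
  have "primes_upto 1 = {}" unfolding primes_upto_def by (auto dest: prime_gt_1_nat)
  then show ?case by (simp add: chebyshev_theta_def)
next
  case (Suc J)
  have "chebyshev_theta (2 ^ Suc J)
      = chebyshev_theta (2 ^ J) + (chebyshev_theta (2 * 2 ^ J) - chebyshev_theta (2 ^ J))" by simp
  also have "\<dots> \<le> 2 ^ (J + 1) * ln 2 + 2 ^ J * ln 4"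
    using Suc.IH chebyshev_theta_double[of "2 ^ J"] by simp
  also have "ln (4::real) = 2 * ln 2"
    using ln_realpow[of 2 2] by simp
  finally show ?case by (simp add: algebra_simps)
qed

lemma sum_ln_prime_factors_le:
  assumes "(x::nat) > 0"
  shows "(\<Sum>p\<in>prime_factors x. ln (real p)) \<le> ln (real x)"
proof -
  have pos: "\<Prod>(prime_factors x) > 0"
    by (rule prod_pos) (auto dest: in_prime_factors_imp_prime simp: prime_gt_0_nat)
  have "(\<Sum>p\<in>prime_factors x. ln (real p)) = ln (real (\<Prod>(prime_factors x)))"
    by (subst of_nat_prod, subst ln_prod) (auto dest: in_prime_factors_imp_prime simp: prime_gt_0_nat)
  also have "\<dots> \<le> ln (real x)"
    using pos prod_prime_factors_le[OF assms, of "prime_factors x"] assms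
    by (subst ln_le_cancel_iff) (simp_all only: of_nat_le_iff of_nat_0_less_iff order_refl)
  finally show ?thesis .
qed

text \<open>Legendre-type estimate \<Sum>_{p \<le> M} \<lfloor>N/p\<rfloor> ln p \<le> N ln N (the left side is at most ln N!).\<close>
lemma sum_floor_div_ln_primes_le:
  "N \<le> M \<Longrightarrow> (\<Sum>p\<in>primes_upto M. real (N div p) * ln (real p)) \<le> real N * ln (real N)"
proof (induction N)
  case 0 then show ?case by simp
next
  case (Suc N)
  have divisors: "prime_factors (Suc N) = {p\<in>primes_upto M. p dvd Suc N}"
    using Suc.prems unfolding primes_upto_def
    using dvd_imp_le[of _ "Suc N"] by (auto simp: in_prime_factors_iff) (meson le_trans zero_less_Suc)
  have "(\<Sum>p\<in>primes_upto M. real (Suc N div p) * ln (real p))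
      = (\<Sum>p\<in>primes_upto M. real (N div p) * ln (real p))
        + (\<Sum>p\<in>primes_upto M. (if p dvd Suc N then ln (real p) else 0))"
    by (subst sum.distrib[symmetric]) (rule sum.cong; simp add: div_Suc dvd_eq_mod_eq_0 distrib_right)
  also have "(\<Sum>p\<in>primes_upto M. (if p dvd Suc N then ln (real p) else 0))
       = (\<Sum>p\<in>prime_factors (Suc N). ln (real p))"
    unfolding divisors by (simp add: sum.inter_filter)
  also have "\<dots> \<le> ln (real (Suc N))" by (rule sum_ln_prime_factors_le) simp
  also have "(\<Sum>p\<in>primes_upto M. real (N div p) * ln (real p)) \<le> real N * ln (real N)"
    using Suc by simp
  also have "real N * ln (real N) \<le> real N * ln (real (Suc N))"
  proof (cases "N = 0")
    case False then show ?thesis by (intro mult_left_mono) auto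
  qed simp
  finally show ?case by (simp add: algebra_simps)
qed

lemma mertens_sum_le:
  assumes "N > 0"
  shows "mertens_sum N \<le> ln (real N) + chebyshev_theta N / real N"
proof -
  have "real N * mertens_sum N = (\<Sum>p\<in>primes_upto N. (real N / real p) * ln (real p))"
    unfolding mertens_sum_def by (simp add: sum_distrib_left)
  also have "\<dots> \<le> (\<Sum>p\<in>primes_upto N. (real (N div p) + 1) * ln (real p))"
  proof (intro sum_mono mult_right_mono)
    fix p assume "p \<in> primes_upto N"
    then have p: "p \<ge> 2" by (rule primes_upto_ge_2)
    have "real N = real p * real (N div p) + real (N mod p)"
      by (metis div_mult_mod_eq of_nat_add of_nat_mult mult.commute)
    moreover have "real (N mod p) < real p" using p by simp
    ultimately show "real N / real p \<le> real (N div p) + 1"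
      using p by (simp add: divide_le_eq algebra_simps)
    show "0 \<le> ln (real p)" using p by simp
  qed
  also have "\<dots> = (\<Sum>p\<in>primes_upto N. real (N div p) * ln (real p)) + chebyshev_theta N"
    unfolding chebyshev_theta_def by (simp add: distrib_right sum.distrib)
  also have "\<dots> \<le> real N * ln (real N) + chebyshev_theta N"
    using sum_floor_div_ln_primes_le[of N N] by simp
  finally have "real N * mertens_sum N \<le> real N * ln (real N) + chebyshev_theta N" .
  then show ?thesis using assms by (simp add: field_simps)
qed

lemma mertens_sum_pow2: "mertens_sum (2 ^ J) \<le> (real J + 2) * ln 2"
proof -
  have "mertens_sum (2 ^ J) \<le> ln (real (2 ^ J)) + chebyshev_theta (2 ^ J) / real (2 ^ J)"
    by (rule mertens_sum_le) simp
  also have "chebyshev_theta (2 ^ J) / real (2 ^ J) \<le> 2 * ln 2"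
    using chebyshev_theta_pow2[of J] by (simp add: pos_divide_le_eq mult_ac)
  also have "ln (real (2 ^ J)) = real J * ln 2" by (simp add: ln_realpow)
  finally show ?thesis by (simp add: algebra_simps)
qed

lemma primes_upto_pow2_Suc:
  "primes_upto (2 ^ Suc J) = primes_upto (2 ^ J) \<union> {p. prime p \<and> 2 ^ J < p \<and> p \<le> 2 ^ Suc J}"
  unfolding primes_upto_def by auto

text \<open>On a dyadic block (2^J, 2^(J+1)] we have 1/p \<le> (ln p / p) / (J ln 2); this is the
  step of the partial summation below.\<close>
lemma prime_reciprocal_block_le:
  assumes "J \<ge> 1"
  shows "prime_reciprocal_sum (2 ^ Suc J) - prime_reciprocal_sum (2 ^ J)
    \<le> (mertens_sum (2 ^ Suc J) - mertens_sum (2 ^ J)) / (real J * ln 2)"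
proof -
  let ?B = "{p. prime p \<and> 2 ^ J < p \<and> p \<le> (2::nat) ^ Suc J}"
  have fin: "finite ?B" by simp
  have disj: "primes_upto (2 ^ J) \<inter> ?B = {}" unfolding primes_upto_def by auto
  have JL: "real J * ln 2 > 0" using assms by simp
  have "prime_reciprocal_sum (2 ^ Suc J) - prime_reciprocal_sum (2 ^ J) = (\<Sum>p\<in>?B. 1 / real p)"
    unfolding prime_reciprocal_sum_def primes_upto_pow2_Suc
    by (subst sum.union_disjoint[OF _ fin disj]) auto
  also have "\<dots> \<le> (\<Sum>p\<in>?B. (ln (real p) / real p) / (real J * ln 2))"
  proof (intro sum_mono)
    fix p assume "p \<in> ?B"
    then have p: "2 ^ J < real p"
      by (metis (mono_tags) mem_Collect_eq of_nat_less_iff of_nat_numeral of_nat_power)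
    then have "real J * ln 2 \<le> ln (real p)"
      using ln_mono[of "2 ^ J" "real p"] by (simp add: ln_realpow)
    moreover have "real p > 0" using p by (smt (verit) zero_less_power)
    ultimately show "1 / real p \<le> (ln (real p) / real p) / (real J * ln 2)"
      using JL by (simp add: field_simps)
  qed
  also have "\<dots> = (\<Sum>p\<in>?B. ln (real p) / real p) / (real J * ln 2)"
    by (simp add: sum_divide_distrib)
  also have "(\<Sum>p\<in>?B. ln (real p) / real p) = mertens_sum (2 ^ Suc J) - mertens_sum (2 ^ J)"
    unfolding mertens_sum_def primes_upto_pow2_Suc
    by (subst sum.union_disjoint[OF _ fin disj]) auto
  finally show ?thesis .
qed

text \<open>ln(J+1) - ln J \<ge> 1/(J+1), used to telescope 1/(J+1) into ln J.\<close>
lemma ln_Suc_minus_ln_ge: "real J \<ge> 1 \<Longrightarrow> 1 / (real J + 1) \<le> ln (real J + 1) - ln (real J)"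
proof -
  assume J: "real J \<ge> 1"
  have "ln (real J / (real J + 1)) \<le> real J / (real J + 1) - 1"
    using J by (intro ln_le_minus_one) auto
  moreover have "ln (real J / (real J + 1)) = ln (real J) - ln (real J + 1)"
    using J by (simp add: ln_div)
  moreover have "real J / (real J + 1) - 1 = - 1 / (real J + 1)"
    using J by (simp add: field_simps)
  ultimately show ?thesis by simp
qed

text \<open>Partial summation invariant: combining the block estimate with Mertens' bound
  mertens_sum(2^(J+1)) \<le> (J+3) ln 2 shows that this quantity grows by at most
  ln(J+1) - ln J + 3/J - 3/(J+1) per step.\<close>
lemma prime_reciprocal_partial_summation:
  "J \<ge> 1 \<Longrightarrow> prime_reciprocal_sum (2 ^ J) - mertens_sum (2 ^ J) / (real J * ln 2)
     \<le> ln (real J) + 3 - 3 / real J"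
proof (induction J rule: dec_induct)
  case base
  have "prime_reciprocal_sum 2 \<le> mertens_sum 2 / ln 2"
    unfolding prime_reciprocal_sum_def mertens_sum_def by (simp add: sum_divide_distrib)
      (intro sum_mono, auto simp: primes_upto_def field_simps dest: prime_gt_1_nat)
  then show ?case by simp
next
  case (step J)
  define L :: real where "L = ln 2"
  define j where "j = real J"
  define c where "c = 1 / j - 1 / (j + 1)"
  have j1: "j \<ge> 1" unfolding j_def using step(1) by simp
  have L: "L > 0" unfolding L_def by simp
  have mertens: "mertens_sum (2 ^ Suc J) \<le> (j + 3) * L"
    using mertens_sum_pow2[of "Suc J"] unfolding j_def L_def by (simp add: add.commute)
  have block: "prime_reciprocal_sum (2 ^ Suc J)
      \<le> prime_reciprocal_sum (2 ^ J) + (mertens_sum (2 ^ Suc J) - mertens_sum (2 ^ J)) / (j * L)"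
    using prime_reciprocal_block_le[OF step(1)] unfolding j_def L_def by simp
  have rearrange: "(t' - t) / (j * L) - t' / ((j + 1) * L) = t' * c / L - t / (j * L)" for t t' :: real
  proof -
    have "t' * c / L = t' / (j * L) - t' / ((j + 1) * L)"
      unfolding c_def by (simp add: right_diff_distrib diff_divide_distrib)
    then show ?thesis by (simp add: diff_divide_distrib)
  qed
  have c_nonneg: "c \<ge> 0" using j1 unfolding c_def by (simp add: field_simps)
  have "mertens_sum (2 ^ Suc J) * c / L \<le> (j + 3) * c"
    using mult_right_mono[OF mertens c_nonneg] L by (simp add: pos_divide_le_eq mult_ac)
  also have "(j + 3) * c = j * c + 3 * c" by (simp add: distrib_right)
  also have "j * c = 1 / (j + 1)"
    using j1 unfolding c_def by (simp add: right_diff_distrib divide_simps)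
  also have "3 * c = 3 / j - 3 / (j + 1)" unfolding c_def by (simp add: right_diff_distrib)
  also have "1 / (j + 1) \<le> ln (j + 1) - ln j"
    using ln_Suc_minus_ln_ge[of J] j1 unfolding j_def by simp
  finally have growth: "mertens_sum (2 ^ Suc J) * c / L \<le> ln (j + 1) - ln j + 3 / j - 3 / (j + 1)"
    by simp
  have IH: "prime_reciprocal_sum (2 ^ J) - mertens_sum (2 ^ J) / (j * L) \<le> ln j + 3 - 3 / j"
    using step.IH unfolding j_def L_def .
  have "prime_reciprocal_sum (2 ^ Suc J) - mertens_sum (2 ^ Suc J) / ((j + 1) * L)
      \<le> ln (j + 1) + 3 - 3 / (j + 1)"
    using IH block growth rearrange[where t = "mertens_sum (2 ^ J)" and t' = "mertens_sum (2 ^ Suc J)"] by linarith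
  then show ?case unfolding j_def L_def by (simp add: add.commute)
qed

lemma prime_reciprocal_sum_pow2:
  assumes "J \<ge> 1"
  shows "prime_reciprocal_sum (2 ^ J) \<le> ln (real J) + 6"
proof -
  have "prime_reciprocal_sum (2 ^ J) \<le> mertens_sum (2 ^ J) / (real J * ln 2) + ln (real J) + 3"
    using prime_reciprocal_partial_summation[OF assms] assms
    by (smt (verit, best) divide_nonneg_nonneg of_nat_0_le_iff)
  also have "mertens_sum (2 ^ J) / (real J * ln 2) \<le> ((real J + 2) * ln 2) / (real J * ln 2)"
    using mertens_sum_pow2[of J] assms by (intro divide_right_mono) auto
  also have "((real J + 2) * ln 2) / (real J * ln 2) = 1 + 2 / real J"
    using assms by (simp add: field_simps)
  also have "2 / real J \<le> 2" using assms by (simp add: field_simps)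
  finally show ?thesis by simp
qed

text \<open>\<Sum>_{p \<le> N} 1/p^2 \<le> 1 - 1/N, by telescoping 1/k^2 \<le> 1/(k-1) - 1/k.\<close>
lemma sum_inverse_square_primes_le:
  "N \<ge> 1 \<Longrightarrow> (\<Sum>p\<in>primes_upto N. 1 / (real p)\<^sup>2) \<le> 1 - 1 / real N"
proof (induction N rule: dec_induct)
  case base
  have "primes_upto 1 = {}" unfolding primes_upto_def by (auto dest: prime_gt_1_nat)
  then show ?case by simp
next
  case (step N)
  have "1 / (real N + 1)\<^sup>2 \<le> 1 / (real N * (real N + 1))"
    using step(1) by (intro divide_left_mono) (auto simp: power2_eq_square)
  also have "\<dots> = 1 / real N - 1 / (real N + 1)"
    using step(1) by (simp add: diff_frac_eq)
  finally have telescope: "1 / (real N + 1)\<^sup>2 \<le> 1 / real N - 1 / (real N + 1)" .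
  show ?case
  proof (cases "prime (Suc N)")
    case True
    then have "primes_upto (Suc N) = insert (Suc N) (primes_upto N)"
      unfolding primes_upto_def by (auto simp: le_Suc_eq)
    moreover have "Suc N \<notin> primes_upto N" unfolding primes_upto_def by auto
    ultimately have "(\<Sum>p\<in>primes_upto (Suc N). 1 / (real p)\<^sup>2)
        = (\<Sum>p\<in>primes_upto N. 1 / (real p)\<^sup>2) + 1 / (real N + 1)\<^sup>2"
      by (simp add: add.commute)
    then show ?thesis using step.IH telescope by (simp add: add.commute)
  next
    case False
    then have "primes_upto (Suc N) = primes_upto N"
      unfolding primes_upto_def by (auto simp: le_Suc_eq)
    moreover have "1 / real N \<ge> 1 / (real N + 1)" using step(1) by (simp add: frac_le)
    ultimately show ?thesis using step.IH by (simp add: add.commute)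
  qed
qed

text \<open>Mertens' product: \<Prod>_{p \<le> 2^J} (1 - 1/p) \<ge> e^-8 / J, via ln(1 - x) \<ge> -x - 2x^2.\<close>
lemma mertens_product_pow2:
  assumes "J \<ge> 1"
  shows "(\<Prod>p\<in>primes_upto (2 ^ J). 1 - 1 / real p) \<ge> exp (-8) / real J"
proof -
  let ?P = "primes_upto (2 ^ J)"
  have p2: "real p \<ge> 2" if "p \<in> ?P" for p
    using primes_upto_ge_2[OF that] by simp
  have pos: "1 - 1 / real p > 0" if "p \<in> ?P" for p
    using p2[OF that] by (simp add: field_simps)
  have "- 8 - ln (real J) \<le> - (prime_reciprocal_sum (2 ^ J)) - 2 * (\<Sum>p\<in>?P. 1 / (real p)\<^sup>2)"
  proof -
    have "(\<Sum>p\<in>?P. 1 / (real p)\<^sup>2) \<le> 1 - 1 / real ((2::nat) ^ J)"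
      by (rule sum_inverse_square_primes_le) simp
    moreover have "1 / real ((2::nat) ^ J) \<ge> 0" by simp
    ultimately have "(\<Sum>p\<in>?P. 1 / (real p)\<^sup>2) \<le> 1" by linarith
    then show ?thesis using prime_reciprocal_sum_pow2[OF assms] by linarith
  qed
  also have "\<dots> = (\<Sum>p\<in>?P. - (1 / real p) - 2 * (1 / real p)\<^sup>2)"
    unfolding prime_reciprocal_sum_def by (simp add: sum_subtractf sum_negf sum_distrib_left power_one_over)
  also have "\<dots> \<le> (\<Sum>p\<in>?P. ln (1 - 1 / real p))"
  proof (intro sum_mono)
    fix p assume "p \<in> ?P"
    then show "- (1 / real p) - 2 * (1 / real p)\<^sup>2 \<le> ln (1 - 1 / real p)"
      using p2[of p] by (intro ln_one_minus_pos_lower_bound) (auto simp: field_simps)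
  qed
  also have "\<dots> = ln (\<Prod>p\<in>?P. 1 - 1 / real p)"
  proof (rule ln_prod[symmetric])
    fix p assume "p \<in> ?P"
    from pos[OF this] show "1 - 1 / real p \<noteq> 0" by linarith
  qed simp
  finally have ln_bound: "- 8 - ln (real J) \<le> ln (\<Prod>p\<in>?P. 1 - 1 / real p)" .
  have "(\<Prod>p\<in>?P. 1 - 1 / real p) > 0" using pos by (intro prod_pos) auto
  moreover have "exp (-8) / real J = exp (- 8 - ln (real J))"
    using assms by (simp add: exp_diff)
  ultimately show ?thesis using ln_bound by (simp only: ln_ge_iff)
qed

section \<open>A lower bound for Euler's totient\<close>

lemma ln_ge_one_minus_inverse: "(x::real) > 0 \<Longrightarrow> 1 - 1 / x \<le> ln x"
  using ln_le_minus_one[of "1 / x"] by (simp add: ln_div)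

text \<open>ln ln n is bounded away from 0 for n \<ge> 3 (using ln 3 \<ge> 2 - e/3 > 12/11).\<close>
lemma ln_ln_ge:
  assumes "n \<ge> 3"
  shows "1 / 12 \<le> ln (ln (real n))"
proof -
  have "1 - exp 1 / 3 \<le> ln (3 / exp 1 :: real)"
    using ln_ge_one_minus_inverse[of "3 / exp 1"] by simp
  also have "\<dots> = ln 3 - 1" by (simp add: ln_div)
  finally have "ln 3 \<ge> 1 + (1 - 272/300 :: real)" using e_less_272 by linarith
  moreover have "ln (real n) \<ge> ln 3" using assms by simp
  ultimately have L: "ln (real n) \<ge> 1 + (1 - 272/300)" by linarith
  then have "1 - 1 / ln (real n) \<le> ln (ln (real n))" by (intro ln_ge_one_minus_inverse) linarith
  moreover have "1 / ln (real n) \<le> 1 / (1 + (1 - 272/300))"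
    using L by (intro divide_left_mono) auto
  ultimately show ?thesis by simp
qed

text \<open>Prime factors of n above y \<ge> 2 ln n are fewer than y/2, so they remove at most
  half of the Euler product.\<close>
lemma prod_large_prime_factors_ge:
  fixes n :: nat and y :: real
  assumes "n > 0" "B \<subseteq> prime_factors n" "\<And>p. p \<in> B \<Longrightarrow> y < real p"
    and "3 \<le> y" "2 * ln (real n) \<le> y"
  shows "(\<Prod>p\<in>B. 1 - 1 / real p) \<ge> 1 / 2"
proof -
  define k where "k = card B"
  have fin: "finite B" using assms(2) finite_subset by auto
  have "y ^ k = (\<Prod>p\<in>B. y)" unfolding k_def by simp
  also have "\<dots> \<le> (\<Prod>p\<in>B. real p)"
    using assms(3,4) by (intro prod_mono) (auto intro: less_imp_le)
  also have "\<dots> \<le> real n"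
    using prod_prime_factors_le[OF assms(1,2)] by (simp only: of_nat_prod[symmetric] of_nat_le_iff)
  finally have "y ^ k \<le> real n" .
  then have "ln (y ^ k) \<le> ln (real n)" using assms(4) by (intro ln_mono) auto
  then have "real k * ln y \<le> ln (real n)" using assms(4) by (simp add: ln_realpow)
  moreover have "1 \<le> ln y"
    using ln3_gt_1 ln_le_cancel_iff[of 3 y] assms(4) by linarith
  ultimately have "real k \<le> ln (real n)"
    using mult_left_mono[of 1 "ln y" "real k"] by simp
  then have few: "real k / y \<le> 1 / 2" using assms(4,5) by (simp add: divide_le_eq)
  have "1 - real k / y = 1 + real k * (- 1 / y)" by simp
  also have "\<dots> \<le> (1 + (- 1 / y)) ^ k" by (rule Bernoulli_inequality) (use assms(4) in simp)
  also have "(1 + (- 1 / y)) ^ k = (\<Prod>p\<in>B. 1 - 1 / y)" unfolding k_def by simp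
  also have "\<dots> \<le> (\<Prod>p\<in>B. 1 - 1 / real p)"
  proof (intro prod_mono conjI)
    fix p assume "p \<in> B"
    then have "y < real p" by (rule assms(3))
    then show "1 - 1 / y \<le> 1 - 1 / real p" using assms(4) by (simp add: frac_le)
    show "0 \<le> 1 - 1 / y" using assms(4) by simp
  qed
  finally show ?thesis using few by linarith
qed

lemma dyadic_scale:
  fixes L :: real
  assumes "L \<ge> 3"
  obtains J :: nat where "J \<ge> 1" "2 * L \<le> 2 ^ J" "real J \<le> 4 * ln L"
proof
  define J where "J = nat \<lceil>log 2 L\<rceil> + 1"
  have lnL: "ln L \<ge> 1" using ln3_gt_1 ln_le_cancel_iff[of 3 L] assms by linarith
  have log_pos: "log 2 L > 0" using assms by simp
  have J_ge: "log 2 L + 1 \<le> real J" and J_le: "real J \<le> log 2 L + 2"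
    unfolding J_def using log_pos by linarith+
  show "J \<ge> 1" unfolding J_def by simp
  have "2 * L = 2 powr (log 2 L + 1)" using assms by (simp add: powr_add)
  also have "\<dots> \<le> 2 powr real J" using J_ge by (intro powr_mono) auto
  also have "\<dots> = 2 ^ J" by (simp add: powr_realpow)
  finally show "2 * L \<le> 2 ^ J" .
  have "log 2 L = ln L / ln 2" by (simp add: log_def)
  also have "\<dots> \<le> ln L / (2/3)" using ln2_ge_two_thirds lnL by (intro divide_left_mono) auto
  also have "\<dots> = 3/2 * ln L" by simp
  finally show "real J \<le> 4 * ln L" using J_le lnL by linarith
qed

text \<open>The Euler product over the prime factors of n is at least e^-8 / (8 ln ln n):
  split the prime factors at y = 2^J \<ge> 2 ln n; the small ones are controlled by
  Mertens' product, the large ones by their scarcity.\<close>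
lemma euler_product_ge:
  assumes "n \<ge> 27"
  shows "(\<Prod>p\<in>prime_factors n. 1 - 1 / real p) \<ge> exp (-8) / (8 * ln (ln (real n)))"
proof -
  define L where "L = ln (real n)"
  have "ln (27::real) = 3 * ln 3" using ln_realpow[of 3 3] by simp
  moreover have "ln 27 \<le> L" unfolding L_def using assms by simp
  ultimately have L3: "L \<ge> 3" using ln3_gt_1 by linarith
  obtain J where J1: "J \<ge> 1" and y_ge: "2 * L \<le> 2 ^ J" and J_le: "real J \<le> 4 * ln L"
    using dyadic_scale[OF L3] by blast
  define y where "y = (2::nat) ^ J"
  define A where "A = {p\<in>prime_factors n. p \<le> y}"
  define B where "B = {p\<in>prime_factors n. y < p}"
  have "prime_factors n = A \<union> B" "A \<inter> B = {}" unfolding A_def B_def by auto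
  then have split: "(\<Prod>p\<in>prime_factors n. 1 - 1 / real p)
      = (\<Prod>p\<in>A. 1 - 1 / real p) * (\<Prod>p\<in>B. 1 - 1 / real p)"
    by (metis finite_Un finite_set_mset prod.union_disjoint)
  have "exp (-8) / real J \<le> (\<Prod>p\<in>primes_upto y. 1 - 1 / real p)"
    unfolding y_def by (rule mertens_product_pow2[OF J1])
  also have "\<dots> \<le> (\<Prod>p\<in>A. 1 - 1 / real p)"
    by (rule prod_subset_ge)
      (auto simp: A_def primes_upto_def in_prime_factors_iff dest: prime_gt_0_nat)
  finally have small: "exp (-8) / real J \<le> (\<Prod>p\<in>A. 1 - 1 / real p)" .
  have large: "1 / 2 \<le> (\<Prod>p\<in>B. 1 - 1 / real p)"
    using y_ge L3 assms unfolding L_def y_def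
    by (intro prod_large_prime_factors_ge[of n B "real y"]) (auto simp: B_def y_def)
  have "exp (-8) / (8 * ln L) \<le> exp (-8) / (2 * real J)"
    using J1 J_le by (intro divide_left_mono) auto
  also have "\<dots> = exp (-8) / real J * (1 / 2)" by simp
  also have "\<dots> \<le> (\<Prod>p\<in>A. 1 - 1 / real p) * (\<Prod>p\<in>B. 1 - 1 / real p)"
    using small large order.trans[OF _ small, of 0] by (intro mult_mono) simp_all
  finally show ?thesis unfolding split L_def .
qed

lemma totient_ge:
  assumes "n \<ge> 3"
  shows "exp (-8) / 324 * real n / ln (ln (real n)) \<le> real (totient n)"
proof -
  have ll: "ln (ln (real n)) \<ge> 1/12" by (rule ln_ln_ge[OF assms])
  show ?thesis
  proof (cases "n \<ge> 27")
    case True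
    have "exp (-8) / 324 * real n / ln (ln (real n)) \<le> real n * (exp (-8) / (8 * ln (ln (real n))))"
      using ll by (simp add: field_simps)
    also have "\<dots> \<le> real n * (\<Prod>p\<in>prime_factors n. 1 - 1 / real p)"
      using euler_product_ge[OF True] by (intro mult_left_mono) auto
    also have "\<dots> = real (totient n)" by (rule totient_formula2[symmetric])
    finally show ?thesis .
  next
    case False
    have "exp (-8) / 324 * real n / ln (ln (real n)) \<le> exp (-8) / 324 * 27 / (1/12)"
      using False ll by (intro frac_le mult_left_mono) auto
    also have "\<dots> \<le> 1" by simp
    also have "1 \<le> real (totient n)" using assms by (simp add: Suc_le_eq)
    finally show ?thesis .
  qed
qed

text \<open>(9/32) X dominates X^(1/20) once X \<ge> 4, since 4^(19/20) \<ge> 32/9.\<close>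
lemma powr_one_twentieth_le:
  fixes X :: real
  assumes "X \<ge> 4"
  shows "X powr (1/20) \<le> 9/32 * X"
proof -
  have "(32::real) ^ 20 \<le> 4 ^ 19 * 9 ^ 20" by simp
  then have "(32/9::real) ^ 20 \<le> 4 ^ 19" by (simp add: power_divide divide_le_eq)
  also have "(4::real) ^ 19 = 4 powr (19/20 * 20)" using powr_realpow[of 4 19] by simp
  also have "\<dots> = (4 powr (19/20)) ^ 20" by (subst powr_realpow[symmetric]) (auto simp: powr_powr)
  finally have "32/9 \<le> (4::real) powr (19/20)"
    by (subst (asm) power_mono_iff) auto
  also have "\<dots> \<le> X powr (19/20)" using assms by (intro powr_mono2) auto
  finally have "X powr (1/20) * (32/9) \<le> X powr (1/20) * X powr (19/20)"
    by (intro mult_left_mono) auto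
  also have "\<dots> = X" using assms by (simp flip: powr_add)
  finally show ?thesis by simp
qed

text \<open>Since totient(n) \<ge> 2, the factor 9/32 can be absorbed into the exponent.\<close>
lemma primover_cofactor_ge_powr:
  assumes "a \<ge> 2" "n \<ge> 3"
  shows "real a powr (real (totient n) / 20) \<le> primover_cofactor a n"
proof -
  obtain k where k: "totient n = 2 * k" using assms(2) totient_even[of n] by (auto elim: evenE)
  moreover have "totient n \<noteq> 0" using assms(2) by simp
  ultimately have "totient n \<ge> 2" by simp
  then have "(2::real) ^ 2 \<le> 2 ^ totient n" by (intro power_increasing) auto
  also have "\<dots> \<le> real a ^ totient n" using assms(1) by (intro power_mono) auto
  finally have "4 \<le> real a ^ totient n" by simp
  then have "(real a ^ totient n) powr (1/20) \<le> 9/32 * real a ^ totient n"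
    by (rule powr_one_twentieth_le)
  moreover have "(real a ^ totient n) powr (1/20) = real a powr (real (totient n) / 20)"
    using assms(1) by (simp add: powr_realpow[symmetric] powr_powr)
  moreover have "9/32 * real a ^ totient n \<le> primover_cofactor a n"
    using primover_cofactor_ge[OF assms(1)] assms(2) by simp
  ultimately show ?thesis by linarith
qed

text \<open>The main theorem, with C1 = e^-8/6480: since ln ln n \<ge> 1/12 > 0 and
  totient(n) \<ge> (e^-8/324) n / ln ln n, the exponent n C1 / ln ln n is at most totient(n)/20.\<close>
theorem theorem12:
  "\<exists>C1::real. C1 > 0 \<and>
     (\<forall>a n :: nat. a \<ge> 2 \<longrightarrow> n \<ge> 3 \<longrightarrow>
        primover_cofactor a n \<ge> (real a ^ n - 1) powr (C1 / ln (ln (real n))))"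
proof (intro exI[of _ "exp (-8) / 6480"] conjI allI impI)
  fix a n :: nat
  assume a: "a \<ge> 2" and n: "n \<ge> 3"
  define e where "e = exp (-8) / 6480 / ln (ln (real n))"
  have e_nonneg: "e \<ge> 0" unfolding e_def using ln_ln_ge[OF n] by simp
  have "real n * e \<le> real (totient n) / 20"
    using totient_ge[OF n] unfolding e_def by (simp add: mult.commute)
  have "(real a ^ n - 1) powr e \<le> (real a ^ n) powr e"
    using a e_nonneg by (intro powr_mono2) auto
  also have "\<dots> = real a powr (real n * e)"
    using a by (simp add: powr_realpow[symmetric] powr_powr)
  also have "\<dots> \<le> real a powr (real (totient n) / 20)"
    using a \<open>real n * e \<le> real (totient n) / 20\<close> by (intro powr_mono) auto
  also have "\<dots> \<le> primover_cofactor a n" by (rule primover_cofactor_ge_powr[OF a n])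
  finally show "(real a ^ n - 1) powr (exp (-8) / 6480 / ln (ln (real n))) \<le> primover_cofactor a n"
    unfolding e_def .
qed simp

end
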